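(* Let $\mu,\nu$ be probability measures on $\mathbb{R}$, let $(X_k)_{k\ge1}$ be i.i.d. with law $\mu$, and $(W_j)_{j\ge1}$ i.i.d. with law $\nu$, independent of $(X_k)$. Fix an integer $M>0$ and set $Y_{(k-1)M+i}:=X_k+W_{(k-1)M+i}$ for $i=1,\dots,M$, $k=1,2,\dots$. Let $(B_n)$ be Borel subsets of $\mathbb{R}$ and $\tau\ge 0$, and assume $$\lim_{n\to\infty}\sup_{x\in\mathbb{R}}\nu(B_n+x)=0\qquad\text{and}\qquad\lim_{n\to\infty}n\,(\mu*\nu)(B_n)=\tau.$$ Then $$\lim_{n\to\infty}\mathbb{P}\big(Y_i\notin B_{nM}\text{ for }i=1,2,\dots,nM\big)=e^{-\tau}.$$
   Context: $\mu*\nu$ denotes the convolution of the measures (the law of $X_1+W_1$), and $B_n+x:=\{b+x: b\in B_n\}$. *)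

theory Defs
  imports "HOL-Probability.Probability"
begin

end

theory Submission
  imports Defs
begin

text \<open>
Split the indices \<open>1..nM\<close> into \<open>n\<close> blocks of \<open>M\<close> consecutive indices; the \<open>Y\<^sub>i\<close> of the
\<open>k\<close>-th block all share the summand \<open>X\<^sub>k\<close>. Distinct blocks depend on disjoint sets of the
independent variables, so the probability of no hit is a product over the blocks. Inside one
block let \<open>q = (\<mu> * \<nu>)(B)\<close> and \<open>s = sup\<^sub>x \<nu>(B + x)\<close>. A single hit has probability \<open>q\<close>, and two
hits \<open>X\<^sub>k + W\<^sub>i, X\<^sub>k + W\<^sub>j \<in> B\<close> have probability at most \<open>s q\<close>, because given \<open>(X\<^sub>k, W\<^sub>i)\<close> the
second one has probability \<open>\<nu>(B - X\<^sub>k) \<le> s\<close>. Bonferroni then bounds the block probability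
between \<open>1 - M q\<close> and \<open>1 - M q (1 - M s)\<close>. Since \<open>n M q \<rightarrow> \<tau>\<close> and \<open>s \<rightarrow> 0\<close>, the \<open>n\<close>-th powers
of both bounds tend to \<open>e\<^sup>-\<^sup>\<tau>\<close>.
\<close>

lemma tendsto_zero_if_real_mult_tendsto:
  fixes a :: "nat \<Rightarrow> real"
  assumes "(\<lambda>n. real n * a n) \<longlonglongrightarrow> c"
  shows "a \<longlonglongrightarrow> 0"
proof -
  have "(\<lambda>n. real n * a n * (1 / real n)) \<longlonglongrightarrow> c * 0"
    by (intro tendsto_mult assms lim_1_over_n)
  moreover have "eventually (\<lambda>n. real n * a n * (1 / real n) = a n) sequentially"
    using eventually_gt_at_top[of "0::nat"] by eventually_elim simp
  ultimately show ?thesis by (simp add: Lim_transform_eventually)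
qed

lemma tendsto_one_minus_power_exp:
  fixes a :: "nat \<Rightarrow> real"
  assumes lim: "(\<lambda>n. real n * a n) \<longlonglongrightarrow> c" and nonneg: "eventually (\<lambda>n. 0 \<le> a n) sequentially"
  shows "(\<lambda>n. (1 - a n) ^ n) \<longlonglongrightarrow> exp (- c)"
proof -
  have a0: "a \<longlonglongrightarrow> 0" using lim by (rule tendsto_zero_if_real_mult_tendsto)
  have small: "eventually (\<lambda>n. 0 \<le> a n \<and> a n \<le> 1/2) sequentially"
    using order_tendstoD(2)[OF a0, of "1/2", simplified] nonneg by eventually_elim auto
  have "(\<lambda>n. - (real n * a n) - 2 * (real n * a n * a n)) \<longlonglongrightarrow> - c - 2 * (c * 0)"
    by (intro tendsto_intros lim a0)
  then have lower: "(\<lambda>n. - (real n * a n) - 2 * (real n * a n * a n)) \<longlonglongrightarrow> - c" by simp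
  have upper: "(\<lambda>n. - (real n * a n)) \<longlonglongrightarrow> - c" by (intro tendsto_intros lim)
  have "(\<lambda>n. real n * ln (1 - a n)) \<longlonglongrightarrow> - c"
  proof (rule tendsto_sandwich[OF _ _ lower upper])
    show "eventually (\<lambda>n. - (real n * a n) - 2 * (real n * a n * a n) \<le> real n * ln (1 - a n)) sequentially"
      using small
    proof eventually_elim
      case (elim n)
      have "- a n - 2 * (a n)\<^sup>2 \<le> ln (1 - a n)"
        using elim by (intro ln_one_minus_pos_lower_bound) auto
      then have "real n * (- a n - 2 * (a n)\<^sup>2) \<le> real n * ln (1 - a n)"
        by (intro mult_left_mono) auto
      then show ?case by (simp add: power2_eq_square algebra_simps)
    qed
    show "eventually (\<lambda>n. real n * ln (1 - a n) \<le> - (real n * a n)) sequentially"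
      using small
    proof eventually_elim
      case (elim n)
      have "ln (1 - a n) \<le> - a n" using ln_le_minus_one[of "1 - a n"] elim by auto
      then have "real n * ln (1 - a n) \<le> real n * (- a n)" by (rule mult_left_mono) simp
      then show ?case by simp
    qed
  qed
  then have "(\<lambda>n. exp (real n * ln (1 - a n))) \<longlonglongrightarrow> exp (- c)" by (rule tendsto_exp)
  moreover have "eventually (\<lambda>n. exp (real n * ln (1 - a n)) = (1 - a n) ^ n) sequentially"
    using small by eventually_elim (simp add: exp_of_nat_mult)
  ultimately show ?thesis by (rule Lim_transform_eventually)
qed

lemma prod_bounds_tendsto_exp:
  fixes a r :: "nat \<Rightarrow> real" and f :: "nat \<Rightarrow> nat \<Rightarrow> real"
  assumes lim: "(\<lambda>n. real n * a n) \<longlonglongrightarrow> c" and r: "r \<longlonglongrightarrow> 0" and nonneg: "\<And>n. 0 \<le> a n"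
    and lower: "\<And>n k. k \<ge> 1 \<Longrightarrow> 1 - a n \<le> f n k"
    and upper: "\<And>n k. k \<ge> 1 \<Longrightarrow> f n k \<le> 1 - a n * (1 - r n)"
  shows "(\<lambda>n. \<Prod>k\<in>{1..n}. f n k) \<longlonglongrightarrow> exp (- c)"
proof (rule tendsto_sandwich)
  show "(\<lambda>n. (1 - a n) ^ n) \<longlonglongrightarrow> exp (- c)"
    using lim nonneg by (intro tendsto_one_minus_power_exp) auto
  have "(\<lambda>n. real n * a n * (1 - r n)) \<longlonglongrightarrow> c * (1 - 0)"
    by (intro tendsto_intros lim r)
  moreover have "eventually (\<lambda>n. 0 \<le> a n * (1 - r n)) sequentially"
    using order_tendstoD(2)[OF r, of 1, simplified] by eventually_elim (simp add: nonneg)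
  ultimately show "(\<lambda>n. (1 - a n * (1 - r n)) ^ n) \<longlonglongrightarrow> exp (- c)"
    by (intro tendsto_one_minus_power_exp) (simp_all add: mult.assoc)
  have a_le_1: "eventually (\<lambda>n. a n \<le> 1) sequentially"
    using order_tendstoD(2)[OF tendsto_zero_if_real_mult_tendsto[OF lim], of 1, simplified]
    by eventually_elim simp
  then show "eventually (\<lambda>n. (1 - a n) ^ n \<le> (\<Prod>k\<in>{1..n}. f n k)) sequentially"
  proof eventually_elim
    case (elim n)
    have "(\<Prod>k\<in>{1..n}. 1 - a n) \<le> (\<Prod>k\<in>{1..n}. f n k)"
      using elim lower by (intro prod_mono) auto
    then show ?case by simp
  qed
  show "eventually (\<lambda>n. (\<Prod>k\<in>{1..n}. f n k) \<le> (1 - a n * (1 - r n)) ^ n) sequentially"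
    using a_le_1
  proof eventually_elim
    case (elim n)
    have "(\<Prod>k\<in>{1..n}. f n k) \<le> (\<Prod>k\<in>{1..n}. 1 - a n * (1 - r n))"
      using elim lower upper by (intro prod_mono) (auto intro: order.trans[of 0 "1 - a n"])
    then show ?case by simp
  qed
qed

lemma measure_translate_le_SUP:
  fixes nu :: "'a::ab_group_add measure"
  assumes "finite_measure nu"
  shows "measure nu {w. x + w \<in> A} \<le> (SUP y. measure nu ((\<lambda>b. b + y) ` A))"
proof -
  have "bdd_above (range (\<lambda>y. measure nu ((\<lambda>b. b + y) ` A)))"
    using finite_measure.bounded_measure[OF assms] by (intro bdd_aboveI) blast
  then have "measure nu ((\<lambda>b. b + - x) ` A) \<le> (SUP y. measure nu ((\<lambda>b. b + y) ` A))"
    by (rule cSUP_upper[OF UNIV_I])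
  moreover have "{w. x + w \<in> A} = (\<lambda>b. b + - x) ` A"
    by (auto simp: image_iff algebra_simps intro!: exI[of _ "x + _"])
  ultimately show ?thesis by simp
qed

lemma (in prob_space) indep_vars_imp_indep_var:
  assumes "indep_vars M' Y I" "a \<in> I" "b \<in> I" "a \<noteq> b"
  shows "indep_var (M' a) (Y a) (M' b) (Y b)"
proof -
  have "indep_var (PiM {a} M') (\<lambda>\<omega>. \<lambda>i\<in>{a}. Y i \<omega>) (PiM {b} M') (\<lambda>\<omega>. \<lambda>i\<in>{b}. Y i \<omega>)"
    using assms by (intro indep_var_restrict) auto
  then have "indep_var (M' a) ((\<lambda>g. g a) \<circ> (\<lambda>\<omega>. \<lambda>i\<in>{a}. Y i \<omega>))
      (M' b) ((\<lambda>g. g b) \<circ> (\<lambda>\<omega>. \<lambda>i\<in>{b}. Y i \<omega>))"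
    by (rule indep_var_compose) (auto intro!: measurable_component_singleton)
  then show ?thesis by (simp add: comp_def)
qed

text \<open>
\<^const>\<open>prob_space.indep_var\<close> requires both random variables to have the same type, so the
independence of a pair \<open>(Y a, Y b)\<close> from \<open>Y c\<close> is expressed by the factorization of their joint law.
\<close>

lemma (in prob_space) indep_vars_distr_pair_factor:
  assumes ind: "indep_vars M' Y I" and "a \<in> I" "b \<in> I" "c \<in> I" "a \<noteq> c" "b \<noteq> c"
  shows "distr M ((M' a \<Otimes>\<^sub>M M' b) \<Otimes>\<^sub>M M' c) (\<lambda>\<omega>. ((Y a \<omega>, Y b \<omega>), Y c \<omega>))
    = distr M (M' a \<Otimes>\<^sub>M M' b) (\<lambda>\<omega>. (Y a \<omega>, Y b \<omega>)) \<Otimes>\<^sub>M distr M (M' c) (Y c)"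
proof -
  define Rab where "Rab \<omega> = (\<lambda>i\<in>{a, b}. Y i \<omega>)" for \<omega>
  define Rc where "Rc \<omega> = (\<lambda>i\<in>{c}. Y i \<omega>)" for \<omega>
  have indep: "indep_var (PiM {a, b} M') Rab (PiM {c} M') Rc"
    unfolding Rab_def Rc_def using assms by (intro indep_var_restrict) auto
  then have [measurable]: "Rab \<in> measurable M (PiM {a, b} M')" "Rc \<in> measurable M (PiM {c} M')"
    by (auto dest: indep_var_rv1 indep_var_rv2)
  have [measurable]: "(\<lambda>g. (g a, g b)) \<in> measurable (PiM {a, b} M') (M' a \<Otimes>\<^sub>M M' b)"
    "(\<lambda>g. g c) \<in> measurable (PiM {c} M') (M' c)"
    by (auto intro!: measurable_Pair measurable_component_singleton)
  interpret Rc: prob_space "distr M (PiM {c} M') Rc"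
    by (rule prob_space_distr) measurable
  have "distr M ((M' a \<Otimes>\<^sub>M M' b) \<Otimes>\<^sub>M M' c) (\<lambda>\<omega>. ((Y a \<omega>, Y b \<omega>), Y c \<omega>))
      = distr M ((M' a \<Otimes>\<^sub>M M' b) \<Otimes>\<^sub>M M' c) ((\<lambda>(f, g). ((f a, f b), g c)) \<circ> (\<lambda>\<omega>. (Rab \<omega>, Rc \<omega>)))"
    by (simp add: comp_def Rab_def Rc_def)
  also have "\<dots> = distr (distr M (PiM {a, b} M' \<Otimes>\<^sub>M PiM {c} M') (\<lambda>\<omega>. (Rab \<omega>, Rc \<omega>)))
          ((M' a \<Otimes>\<^sub>M M' b) \<Otimes>\<^sub>M M' c) (\<lambda>(f, g). ((f a, f b), g c))"
    by (rule distr_distr[symmetric]) measurable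
  also have "\<dots> = distr (distr M (PiM {a, b} M') Rab \<Otimes>\<^sub>M distr M (PiM {c} M') Rc)
          ((M' a \<Otimes>\<^sub>M M' b) \<Otimes>\<^sub>M M' c) (\<lambda>(f, g). ((f a, f b), g c))"
    using indep by (simp add: indep_var_distribution_eq)
  also have "\<dots> = distr (distr M (PiM {a, b} M') Rab) (M' a \<Otimes>\<^sub>M M' b) (\<lambda>g. (g a, g b))
      \<Otimes>\<^sub>M distr (distr M (PiM {c} M') Rc) (M' c) (\<lambda>g. g c)"
    by (intro pair_measure_distr[symmetric] prob_space_imp_sigma_finite Rc.prob_space_distr) measurable
  also have "\<dots> = distr M (M' a \<Otimes>\<^sub>M M' b) ((\<lambda>g. (g a, g b)) \<circ> Rab) \<Otimes>\<^sub>M distr M (M' c) ((\<lambda>g. g c) \<circ> Rc)"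
    by (subst (1 2) distr_distr) measurable
  also have "\<dots> = distr M (M' a \<Otimes>\<^sub>M M' b) (\<lambda>\<omega>. (Y a \<omega>, Y b \<omega>)) \<Otimes>\<^sub>M distr M (M' c) (Y c)"
    by (simp add: comp_def Rab_def Rc_def)
  finally show ?thesis .
qed

lemma (in prob_space) prob_UN_ge_pairwise_bound:
  assumes "finite S" "\<And>i. i \<in> S \<Longrightarrow> G i \<in> events" "0 \<le> c"
    and "\<And>i j. i \<in> S \<Longrightarrow> j \<in> S \<Longrightarrow> i \<noteq> j \<Longrightarrow> prob (G i \<inter> G j) \<le> c"
  shows "(\<Sum>i\<in>S. prob (G i)) - real (card S) * real (card S) * c \<le> prob (\<Union>i\<in>S. G i)"
  using assms
proof (induction S rule: finite_induct)
  case empty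
  then show ?case by simp
next
  case (insert a S)
  have "prob ((\<Union>i\<in>S. G i) \<inter> G a) = prob (\<Union>i\<in>S. G i \<inter> G a)" by (simp add: Int_UN_distrib2)
  also have "\<dots> \<le> (\<Sum>i\<in>S. prob (G i \<inter> G a))"
    using insert by (intro finite_measure_subadditive_finite) auto
  also have "\<dots> \<le> real (card S) * c"
    using sum_mono[of S "\<lambda>i. prob (G i \<inter> G a)" "\<lambda>_. c"] insert by fastforce
  finally have overlap: "prob ((\<Union>i\<in>S. G i) \<inter> G a) \<le> real (card S) * c" .
  have "prob (\<Union>i\<in>insert a S. G i)
      = prob (\<Union>i\<in>S. G i) + prob (G a) - prob ((\<Union>i\<in>S. G i) \<inter> G a)"
    using insert by (subst measure_Un3[symmetric]) (auto simp: Un_commute fmeasurable_eq_sets)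
  moreover have "real (card S) * real (card S) * c + real (card S) * c
      \<le> real (card (insert a S)) * real (card (insert a S)) * c"
    using insert by (simp add: algebra_simps)
  ultimately show ?case using insert overlap by simp
qed

lemma (in prob_space) prob_hit_twice_le:
  fixes X W W' :: "'a \<Rightarrow> real"
  assumes [measurable]: "random_variable borel X" "random_variable borel W" "random_variable borel W'"
    and joint: "distr M ((borel \<Otimes>\<^sub>M borel) \<Otimes>\<^sub>M borel) (\<lambda>\<omega>. ((X \<omega>, W \<omega>), W' \<omega>))
      = distr M (borel \<Otimes>\<^sub>M borel) (\<lambda>\<omega>. (X \<omega>, W \<omega>)) \<Otimes>\<^sub>M distr M borel W'"
    and A[measurable]: "A \<in> sets borel"
    and s: "\<And>x. measure (distr M borel W') {w. x + w \<in> A} \<le> s"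
  shows "prob {\<omega>\<in>space M. X \<omega> + W \<omega> \<in> A \<and> X \<omega> + W' \<omega> \<in> A}
    \<le> s * prob {\<omega>\<in>space M. X \<omega> + W \<omega> \<in> A}"
proof -
  define L where "L = distr M (borel \<Otimes>\<^sub>M borel) (\<lambda>\<omega>. (X \<omega>, W \<omega>))"
  define nu where "nu = distr M borel W'"
  interpret nu: prob_space nu
    unfolding nu_def by (rule prob_space_distr) measurable
  define S :: "((real \<times> real) \<times> real) set"
    where "S = {p. fst (fst p) + snd (fst p) \<in> A \<and> fst (fst p) + snd p \<in> A}"
  have [measurable]: "S \<in> sets ((borel \<Otimes>\<^sub>M borel) \<Otimes>\<^sub>M borel)"
  proof -
    have "Measurable.pred ((borel \<Otimes>\<^sub>M borel) \<Otimes>\<^sub>M borel)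
        (\<lambda>p. fst (fst p) + snd (fst p) \<in> A \<and> fst (fst p) + snd p \<in> A)"
      by measurable
    then show ?thesis by (simp add: S_def pred_def space_pair_measure)
  qed
  have hit_once: "{z :: real \<times> real. fst z + snd z \<in> A} \<in> sets (borel \<Otimes>\<^sub>M borel)"
  proof -
    have "Measurable.pred (borel \<Otimes>\<^sub>M borel) (\<lambda>z :: real \<times> real. fst z + snd z \<in> A)"
      by measurable
    then show ?thesis by (simp add: pred_def space_pair_measure)
  qed
  have "{\<omega>\<in>space M. X \<omega> + W \<omega> \<in> A \<and> X \<omega> + W' \<omega> \<in> A} = (\<lambda>\<omega>. ((X \<omega>, W \<omega>), W' \<omega>)) -` S \<inter> space M"
    by (auto simp: S_def)
  then have "emeasure M {\<omega>\<in>space M. X \<omega> + W \<omega> \<in> A \<and> X \<omega> + W' \<omega> \<in> A} = emeasure (L \<Otimes>\<^sub>M nu) S"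
    unfolding L_def nu_def joint[symmetric] by (subst emeasure_distr; (measurable)?; simp)
  also have "\<dots> = (\<integral>\<^sup>+z. emeasure nu (Pair z -` S) \<partial>L)"
    by (rule nu.emeasure_pair_measure_alt) (simp add: L_def nu_def joint[symmetric])
  also have "\<dots> \<le> (\<integral>\<^sup>+z. ennreal s * indicator {z. fst z + snd z \<in> A} z \<partial>L)"
  proof (intro nn_integral_mono)
    fix z :: "real \<times> real"
    have "Pair z -` S = (if fst z + snd z \<in> A then {w. fst z + w \<in> A} else {})"
      by (auto simp: S_def)
    then show "emeasure nu (Pair z -` S) \<le> ennreal s * indicator {z. fst z + snd z \<in> A} z"
      using s[of "fst z", folded nu_def] by (simp add: nu.emeasure_eq_measure ennreal_leI)
  qed
  also have "\<dots> = ennreal s * emeasure L {z. fst z + snd z \<in> A}"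
    using hit_once by (intro nn_integral_cmult_indicator) (simp add: L_def)
  also have "emeasure L {z. fst z + snd z \<in> A} = emeasure M {\<omega>\<in>space M. X \<omega> + W \<omega> \<in> A}"
    unfolding L_def using hit_once by (subst emeasure_distr) (auto intro!: arg_cong[where f="emeasure M"])
  finally show ?thesis
    using order.trans[OF measure_nonneg s]
    by (simp add: emeasure_eq_measure ennreal_mult[symmetric])
qed

lemma (in prob_space) prob_no_hit_bounds:
  fixes Y :: "'i \<Rightarrow> 'a \<Rightarrow> real" and s :: real
  assumes ind: "indep_vars (\<lambda>_. borel) Y J" and x: "x \<in> J"
    and I: "finite I" "I \<subseteq> J" "x \<notin> I"
    and lawx: "distr M borel (Y x) = mu" and lawI: "\<And>i. i \<in> I \<Longrightarrow> distr M borel (Y i) = nu"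
    and A[measurable]: "A \<in> sets borel" and s: "\<And>x. measure nu {w. x + w \<in> A} \<le> s"
  shows "1 - real (card I) * measure (mu \<star> nu) A \<le> prob {\<omega>\<in>space M. \<forall>i\<in>I. Y x \<omega> + Y i \<omega> \<notin> A}"
    and "prob {\<omega>\<in>space M. \<forall>i\<in>I. Y x \<omega> + Y i \<omega> \<notin> A}
      \<le> 1 - real (card I) * measure (mu \<star> nu) A * (1 - real (card I) * s)"
proof -
  define q where "q = measure (mu \<star> nu) A"
  define G where "G i = {\<omega>\<in>space M. Y x \<omega> + Y i \<omega> \<in> A}" for i
  have rv: "random_variable borel (Y i)" if "i \<in> J" for i
    using ind that by (auto simp: indep_vars_def)
  have G: "G i \<in> events" if "i \<in> I" for i
    using rv[OF x] rv[of i] that I unfolding G_def by auto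
  have no_hit: "prob {\<omega>\<in>space M. \<forall>i\<in>I. Y x \<omega> + Y i \<omega> \<notin> A} = 1 - prob (\<Union>i\<in>I. G i)"
  proof -
    have "{\<omega>\<in>space M. \<forall>i\<in>I. Y x \<omega> + Y i \<omega> \<notin> A} = space M - (\<Union>i\<in>I. G i)"
      by (auto simp: G_def)
    then show ?thesis using G I by (simp add: prob_compl sets.finite_UN)
  qed
  have hit: "prob (G i) = q" if i: "i \<in> I" for i
  proof -
    have "indep_var borel (Y x) borel (Y i)"
      using indep_vars_imp_indep_var[OF ind x, of i] i I by auto
    then have "(mu \<star> nu) = distr M borel (\<lambda>\<omega>. Y x \<omega> + Y i \<omega>)"
      using rv[OF x] rv[of i] i I lawx lawI by (auto simp: sum_indep_random_variable)
    then have "q = measure (distr M borel (\<lambda>\<omega>. Y x \<omega> + Y i \<omega>)) A"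
      by (simp only: q_def)
    also have "\<dots> = prob (G i)"
      using rv[OF x] rv[of i] i I by (subst measure_distr) (auto simp: G_def vimage_def Int_def conj_commute)
    finally show ?thesis ..
  qed
  have s_nonneg: "0 \<le> s" using order.trans[OF measure_nonneg s] .
  have hit_twice: "prob (G i \<inter> G j) \<le> s * q" if "i \<in> I" "j \<in> I" "i \<noteq> j" for i j
  proof -
    have "distr M ((borel \<Otimes>\<^sub>M borel) \<Otimes>\<^sub>M borel) (\<lambda>\<omega>. ((Y x \<omega>, Y i \<omega>), Y j \<omega>))
        = distr M (borel \<Otimes>\<^sub>M borel) (\<lambda>\<omega>. (Y x \<omega>, Y i \<omega>)) \<Otimes>\<^sub>M distr M borel (Y j)"
      using indep_vars_distr_pair_factor[OF ind x, of i j] that I by auto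
    moreover have "i \<in> J" "j \<in> J" using that I by auto
    ultimately have "prob {\<omega>\<in>space M. Y x \<omega> + Y i \<omega> \<in> A \<and> Y x \<omega> + Y j \<omega> \<in> A} \<le> s * prob (G i)"
      unfolding G_def using s lawI[OF \<open>j \<in> I\<close>]
      by (intro prob_hit_twice_le rv x) simp_all
    moreover have "G i \<inter> G j = {\<omega>\<in>space M. Y x \<omega> + Y i \<omega> \<in> A \<and> Y x \<omega> + Y j \<omega> \<in> A}"
      by (auto simp: G_def)
    ultimately show ?thesis using hit that by simp
  qed
  have sum_hit: "(\<Sum>i\<in>I. prob (G i)) = real (card I) * q"
    using hit by simp
  have "prob (\<Union>i\<in>I. G i) \<le> (\<Sum>i\<in>I. prob (G i))"
    using G I by (intro finite_measure_subadditive_finite) auto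
  then show "1 - real (card I) * measure (mu \<star> nu) A \<le> prob {\<omega>\<in>space M. \<forall>i\<in>I. Y x \<omega> + Y i \<omega> \<notin> A}"
    unfolding no_hit sum_hit q_def by simp
  have "0 \<le> s * q"
    using s_nonneg by (simp add: q_def)
  then have "(\<Sum>i\<in>I. prob (G i)) - real (card I) * real (card I) * (s * q) \<le> prob (\<Union>i\<in>I. G i)"
    using G I hit_twice by (intro prob_UN_ge_pairwise_bound) simp_all
  then show "prob {\<omega>\<in>space M. \<forall>i\<in>I. Y x \<omega> + Y i \<omega> \<notin> A}
      \<le> 1 - real (card I) * measure (mu \<star> nu) A * (1 - real (card I) * s)"
    unfolding no_hit sum_hit q_def[symmetric] by (simp add: algebra_simps)
qed

definition block :: "nat \<Rightarrow> nat \<Rightarrow> nat set" where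
  "block m k = {(k - 1) * m + 1..k * m}"

lemma block_index:
  assumes "i \<in> block m k"
  shows "(i - 1) div m + 1 = k"
proof -
  obtain j where k: "k = Suc j"
    using assms by (cases k) (auto simp: block_def)
  have "(i - 1) div m = j"
    using assms by (intro div_nat_eqI) (auto simp: block_def k algebra_simps)
  then show ?thesis using k by simp
qed

lemma card_block: "k \<ge> 1 \<Longrightarrow> card (block m k) = m"
  by (cases k) (auto simp: block_def)

lemma block_ge_1: "i \<in> block m k \<Longrightarrow> 1 \<le> i"
  by (simp add: block_def)

lemma ball_atLeastAtMost_blocks:
  fixes m n :: nat
  assumes "m > 0"
  shows "(\<forall>i\<in>{1..n * m}. P ((i - 1) div m + 1) i) \<longleftrightarrow> (\<forall>k\<in>{1..n}. \<forall>i\<in>block m k. P k i)"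
proof safe
  fix k i assume "\<forall>i\<in>{1..n * m}. P ((i - 1) div m + 1) i" "k \<in> {1..n}" "i \<in> block m k"
  moreover from this have "i \<in> {1..n * m}"
    by (auto simp: block_def intro: order.trans[OF _ mult_le_mono1])
  ultimately show "P k i" using block_index by metis
next
  fix i assume all: "\<forall>k\<in>{1..n}. \<forall>i\<in>block m k. P k i" and i: "i \<in> {1..n * m}"
  define k where "k = (i - 1) div m + 1"
  have "(i - 1) div m < n" using i assms by (auto simp: div_less_iff_less_mult)
  moreover have "i \<in> block m k"
  proof -
    have "m * ((i - 1) div m) \<le> i - 1" by (rule times_div_less_eq_dividend)
    then have "(k - 1) * m + 1 \<le> i" using i by (simp add: k_def mult.commute del: times_div_less_eq_dividend) arith
    moreover have "i - 1 < m + m * ((i - 1) div m)" using assms by (rule dividend_less_times_div)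
    then have "i \<le> k * m" by (simp add: k_def algebra_simps)
    ultimately show ?thesis by (simp add: block_def)
  qed
  ultimately show "P ((i - 1) div m + 1) i" using all by (auto simp: k_def)
qed

lemma (in prob_space) prob_no_hit_eq_prod_blocks:
  fixes X W :: "nat \<Rightarrow> 'a \<Rightarrow> real"
  assumes ind: "indep_vars (\<lambda>_. borel) (case_sum X W) ({1..} <+> {1..})"
    and m: "m > 0" and A[measurable]: "A \<in> sets borel"
  shows "prob {\<omega>\<in>space M. \<forall>i\<in>{1..n * m}. X ((i - 1) div m + 1) \<omega> + W i \<omega> \<notin> A}
    = (\<Prod>k\<in>{1..n}. prob {\<omega>\<in>space M. \<forall>i\<in>block m k. X k \<omega> + W i \<omega> \<notin> A})"
proof (cases "n = 0")
  case True
  then show ?thesis by (simp add: prob_space)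
next
  case False
  define K where "K k = insert (Inl k) (Inr ` block m k)" for k
  define F where "F k = {\<omega>\<in>space M. \<forall>i\<in>block m k. X k \<omega> + W i \<omega> \<notin> A}" for k
  have "K k \<inter> K k' = {}" if "k \<noteq> k'" for k k'
    using that block_index[of _ m k] block_index[of _ m k'] by (auto simp: K_def)
  then have disj: "disjoint_family_on K {1..n}"
    by (simp add: disjoint_family_on_def)
  have "indep_vars (\<lambda>k. PiM (K k) (\<lambda>_. borel)) (\<lambda>k \<omega>. \<lambda>j\<in>K k. case_sum X W j \<omega>) {1..n}"
    by (rule indep_vars_restrict[OF ind _ disj]) (auto simp: K_def dest: block_ge_1)
  then have "indep_events (\<lambda>k. {\<omega>\<in>space M.
      (\<lambda>g. \<forall>i\<in>block m k. g (Inl k) + g (Inr i) \<notin> A) (\<lambda>j\<in>K k. case_sum X W j \<omega>)}) {1..n}"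
  proof (rule indep_eventsI_indep_vars)
    fix k
    have [measurable]: "(\<lambda>g. g j) \<in> borel_measurable (PiM (K k) (\<lambda>_. borel))" if "j \<in> K k" for j
      using that by (rule measurable_component_singleton)
    have "Measurable.pred (PiM (K k) (\<lambda>_. borel)) (\<lambda>g. \<forall>i\<in>block m k. g (Inl k) + g (Inr i) \<notin> A)"
      by (measurable; simp add: K_def block_def)
    then show "{g \<in> space (PiM (K k) (\<lambda>_. borel)). \<forall>i\<in>block m k. g (Inl k) + g (Inr i) \<notin> A}
        \<in> sets (PiM (K k) (\<lambda>_. borel))"
      by (simp add: pred_def)
  qed
  moreover have "{\<omega>\<in>space M. (\<lambda>g. \<forall>i\<in>block m k. g (Inl k) + g (Inr i) \<notin> A) (\<lambda>j\<in>K k. case_sum X W j \<omega>)}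
      = F k" for k
    by (auto simp: K_def F_def)
  ultimately have "prob (\<Inter>k\<in>{1..n}. F k) = (\<Prod>k\<in>{1..n}. prob (F k))"
    using False by (simp add: indep_events_def)
  moreover have "(\<forall>i\<in>{1..n * m}. X ((i - 1) div m + 1) \<omega> + W i \<omega> \<notin> A)
      \<longleftrightarrow> (\<forall>k\<in>{1..n}. \<forall>i\<in>block m k. X k \<omega> + W i \<omega> \<notin> A)" for \<omega>
    by (rule ball_atLeastAtMost_blocks[OF m, of n "\<lambda>k i. X k \<omega> + W i \<omega> \<notin> A"])
  then have "{\<omega>\<in>space M. \<forall>i\<in>{1..n * m}. X ((i - 1) div m + 1) \<omega> + W i \<omega> \<notin> A} = (\<Inter>k\<in>{1..n}. F k)"
    using False by (auto simp: F_def) (metis atLeastAtMost_iff le_refl less_eq_Suc_le)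
  ultimately show ?thesis by (simp add: F_def)
qed

lemma (in prob_space) prob_block_no_hit_bounds:
  fixes X W :: "nat \<Rightarrow> 'a \<Rightarrow> real" and s :: real
  assumes ind: "indep_vars (\<lambda>_. borel) (case_sum X W) ({1..} <+> {1..})"
    and k: "k \<ge> 1" and lawX: "distr M borel (X k) = mu"
    and lawW: "\<And>j. j \<ge> 1 \<Longrightarrow> distr M borel (W j) = nu"
    and A: "A \<in> sets borel" and s: "\<And>x. measure nu {w. x + w \<in> A} \<le> s"
  shows "1 - real m * measure (mu \<star> nu) A \<le> prob {\<omega>\<in>space M. \<forall>i\<in>block m k. X k \<omega> + W i \<omega> \<notin> A}"
    and "prob {\<omega>\<in>space M. \<forall>i\<in>block m k. X k \<omega> + W i \<omega> \<notin> A}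
      \<le> 1 - real m * measure (mu \<star> nu) A * (1 - real m * s)"
proof -
  have x: "Inl k \<in> {1..} <+> {1..}" using k by (intro InlI) simp
  have I: "finite (Inr ` block m k)" "Inr ` block m k \<subseteq> {1..} <+> {1..}" "Inl k \<notin> Inr ` block m k"
    by (auto simp: block_def)
  have lawx: "distr M borel (case_sum X W (Inl k)) = mu" using lawX by simp
  have lawI: "distr M borel (case_sum X W i) = nu" if "i \<in> Inr ` block m k" for i
    using that lawW block_ge_1 by auto
  have "card (Inr ` block m k :: (nat + nat) set) = m"
    using card_block[OF k] by (simp add: card_image)
  moreover have "{\<omega>\<in>space M. \<forall>i\<in>Inr ` block m k. case_sum X W (Inl k) \<omega> + case_sum X W i \<omega> \<notin> A}
      = {\<omega>\<in>space M. \<forall>i\<in>block m k. X k \<omega> + W i \<omega> \<notin> A}"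
    by auto
  ultimately show "1 - real m * measure (mu \<star> nu) A \<le> prob {\<omega>\<in>space M. \<forall>i\<in>block m k. X k \<omega> + W i \<omega> \<notin> A}"
    and "prob {\<omega>\<in>space M. \<forall>i\<in>block m k. X k \<omega> + W i \<omega> \<notin> A}
      \<le> 1 - real m * measure (mu \<star> nu) A * (1 - real m * s)"
    using prob_no_hit_bounds[OF ind x I lawx lawI A s] by simp_all
qed

theorem theorem34:
  fixes P :: "'a measure" and mu nu :: "real measure"
    and X W :: "nat \<Rightarrow> 'a \<Rightarrow> real"
    and M :: nat and B :: "nat \<Rightarrow> real set" and \<tau> :: real
  assumes P: "prob_space P"
    and mu: "prob_space mu" "sets mu = sets borel"
    and nu: "prob_space nu" "sets nu = sets borel"
    and indep: "prob_space.indep_vars P (\<lambda>_. borel) (case_sum X W) ({1..} <+> {1..})"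
    and lawX: "\<And>k. k \<ge> 1 \<Longrightarrow> distr P borel (X k) = mu"
    and lawW: "\<And>j. j \<ge> 1 \<Longrightarrow> distr P borel (W j) = nu"
    and M: "M > 0"
    and B: "\<And>n. B n \<in> sets borel"
    and tau: "\<tau> \<ge> 0"
    and shift: "(\<lambda>n. SUP x::real. measure nu ((\<lambda>b. b + x) ` B n)) \<longlonglongrightarrow> 0"
    and conv: "(\<lambda>n. real n * measure (mu \<star> nu) (B n)) \<longlonglongrightarrow> \<tau>"
  shows "(\<lambda>n. measure P {\<omega> \<in> space P. \<forall>i\<in>{1..n*M}.
            X ((i - 1) div M + 1) \<omega> + W i \<omega> \<notin> B (n*M)}) \<longlonglongrightarrow> exp (- \<tau>)"
proof -
  interpret P: prob_space P by (rule P)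
  have nM: "strict_mono (\<lambda>n. n * M)" using M by (simp add: strict_mono_def)
  define q where "q n = measure (mu \<star> nu) (B (n * M))" for n
  define s where "s n = (SUP x. measure nu ((\<lambda>b. b + x) ` B (n * M)))" for n
  have s_bound: "measure nu {w. x + w \<in> B (n * M)} \<le> s n" for n x
    unfolding s_def using nu(1) by (intro measure_translate_le_SUP) (simp add: prob_space_def)
  have "(\<lambda>n. \<Prod>k\<in>{1..n}. P.prob {\<omega>\<in>space P. \<forall>i\<in>block M k. X k \<omega> + W i \<omega> \<notin> B (n * M)})
      \<longlonglongrightarrow> exp (- \<tau>)"
  proof (rule prod_bounds_tendsto_exp)
    show "(\<lambda>n. real n * (real M * q n)) \<longlonglongrightarrow> \<tau>"
      using LIMSEQ_subseq_LIMSEQ[OF conv nM] by (simp add: q_def comp_def mult.assoc)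
    show "(\<lambda>n. real M * s n) \<longlonglongrightarrow> 0"
      using tendsto_mult_left[OF LIMSEQ_subseq_LIMSEQ[OF shift nM], of "real M"] by (simp add: s_def comp_def)
    show "0 \<le> real M * q n" for n
      by (simp add: q_def)
    show "1 - real M * q n \<le> P.prob {\<omega>\<in>space P. \<forall>i\<in>block M k. X k \<omega> + W i \<omega> \<notin> B (n * M)}"
      and "P.prob {\<omega>\<in>space P. \<forall>i\<in>block M k. X k \<omega> + W i \<omega> \<notin> B (n * M)}
        \<le> 1 - real M * q n * (1 - real M * s n)" if "k \<ge> 1" for n k
      unfolding q_def using P.prob_block_no_hit_bounds[OF indep that lawX[OF that] lawW B s_bound] by auto
  qed
  then show ?thesis
    using P.prob_no_hit_eq_prod_blocks[OF indep M B] by simp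
qed

end
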